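(* Let $F,B,H,R,Q\in\mathbb{R}^{2\times 2}$ and consider the target motion model $x_{t+1}=Fx_t+Bu_t+w_t$ with $w_t\sim\mathcal{N}(0,R)$, the measurement model $z_t=Hx_t+v_t$ with $v_t\sim\mathcal{N}(0,Q)$, and the spoofed measurement $\tilde z_t=z_t+\epsilon_t$ with spoofing signal $\epsilon_t\in\mathbb{R}^2$. Let $(m_t,\Sigma_t)_{t\ge 0}$ be produced by the Kalman filter started at $\mathcal{N}(m_0,\Sigma_0)$ and fed the true measurements $z_t$, with Kalman gains $K_t$, and let $(\tilde m_t,\tilde\Sigma_t)_{t\ge0}$ be produced by the Kalman filter started at $\mathcal{N}(\tilde m_0,\tilde\Sigma_0)$ and fed the spoofed measurements $\tilde z_t$, with Kalman gains $\tilde K_t$. Define for $t\ge 1$ $$A_t=F-\tilde K_tHF,\qquad B_t=(K_t-\tilde K_t)\big[z_t-H(Fm_{t-1}+Bu_{t-1})\big],\qquad C_t=-\tilde K_t\epsilon_t .$$ Then for every $t\ge 1$, $$m_t-\tilde m_t=\Big(\prod_{i=0}^{t-1}A_{t-i}\Big)(m_0-\tilde m_0)+\sum_{i=0}^{t-2}\Big(\prod_{j=0}^{i}A_{t-j}\Big)(B_{t-1-i}+C_{t-1-i})+B_t+C_t,$$ where $\prod_{j=0}^{i}A_{t-j}=A_tA_{t-1}\cdots A_{t-i}$.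
   Context: Kalman filter used: given an initial mean $m_0$ and covariance $\Sigma_0$ and measurements $y_1,y_2,\dots$, for $t\ge1$ set $\Sigma_{t|t-1}=F\Sigma_{t-1}F^T+R$, $K_t=\Sigma_{t|t-1}H^T(H\Sigma_{t|t-1}H^T+Q)^{-1}$, $\Sigma_t=(I-K_tH)\Sigma_{t|t-1}$, and the mean update $m_t=(I-K_tH)(Fm_{t-1}+Bu_{t-1})+K_ty_t$. The gains $K_t$ depend only on $\Sigma_0$ and the model matrices, not on the measurements. The filter producing $m_t$ uses $y_t=z_t$ and initial data $(m_0,\Sigma_0)$; the filter producing $\tilde m_t$ uses $y_t=\tilde z_t$ and initial data $(\tilde m_0,\tilde\Sigma_0)$, with its own gains $\tilde K_t$. The control inputs $u_t\in\mathbb{R}^2$ are the same for both filters. *)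

theory Defs
  imports "HOL-Analysis.Analysis"
begin

type_synonym mat2 = "real^2^2"
type_synonym vec2 = "real^2"

definition kf_pred :: "mat2 \<Rightarrow> mat2 \<Rightarrow> mat2 \<Rightarrow> mat2" where
  "kf_pred F R P = F ** P ** transpose F + R"

definition kf_gain_of :: "mat2 \<Rightarrow> mat2 \<Rightarrow> mat2 \<Rightarrow> mat2" where
  "kf_gain_of H Q P = P ** transpose H ** matrix_inv (H ** P ** transpose H + Q)"

fun kf_cov :: "mat2 \<Rightarrow> mat2 \<Rightarrow> mat2 \<Rightarrow> mat2 \<Rightarrow> mat2 \<Rightarrow> nat \<Rightarrow> mat2" where
  "kf_cov F H R Q S0 0 = S0"
| "kf_cov F H R Q S0 (Suc t) =
     (mat 1 - kf_gain_of H Q (kf_pred F R (kf_cov F H R Q S0 t)) ** H) ** kf_pred F R (kf_cov F H R Q S0 t)"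

text \<open>Kalman gain K_t (meaningful for t \<ge> 1).\<close>
definition kf_gain :: "mat2 \<Rightarrow> mat2 \<Rightarrow> mat2 \<Rightarrow> mat2 \<Rightarrow> mat2 \<Rightarrow> nat \<Rightarrow> mat2" where
  "kf_gain F H R Q S0 t = kf_gain_of H Q (kf_pred F R (kf_cov F H R Q S0 (t - 1)))"

text \<open>Posterior mean m_t, with controls u and measurements y (y 0 unused).\<close>
fun kf_mean :: "mat2 \<Rightarrow> mat2 \<Rightarrow> mat2 \<Rightarrow> mat2 \<Rightarrow> mat2 \<Rightarrow> vec2 \<Rightarrow> mat2 \<Rightarrow>
                (nat \<Rightarrow> vec2) \<Rightarrow> (nat \<Rightarrow> vec2) \<Rightarrow> nat \<Rightarrow> vec2" where
  "kf_mean F B H R Q m0 S0 u y 0 = m0"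
| "kf_mean F B H R Q m0 S0 u y (Suc t) =
     (mat 1 - kf_gain F H R Q S0 (Suc t) ** H) *v (F *v kf_mean F B H R Q m0 S0 u y t + B *v u t)
     + kf_gain F H R Q S0 (Suc t) *v y (Suc t)"

fun desc_prod :: "(nat \<Rightarrow> mat2) \<Rightarrow> nat \<Rightarrow> nat \<Rightarrow> mat2" where
  "desc_prod A t 0 = mat 1"
| "desc_prod A t (Suc n) = desc_prod A t n ** A (t - n)"

end

theory Submission
  imports Defs
begin

text \<open>Write both mean updates in innovation form \<open>m\<^sub>t = p\<^sub>t + K\<^sub>t (y\<^sub>t - H p\<^sub>t)\<close> with the
  prediction \<open>p\<^sub>t = F m\<^sub>t\<^sub>-\<^sub>1 + B u\<^sub>t\<^sub>-\<^sub>1\<close>. The two predictions differ by \<open>F e\<^sub>t\<^sub>-\<^sub>1\<close>, where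
  \<open>e\<^sub>t = m\<^sub>t - m\<^sub>t'\<close>, so subtracting the updates gives the affine recursion
  \<open>e\<^sub>t = A\<^sub>t e\<^sub>t\<^sub>-\<^sub>1 + B\<^sub>t + C\<^sub>t\<close>; unrolling it yields the closed form.\<close>

lemma kf_mean_Suc_innovation:
  "kf_mean F B H R Q m0 S0 u y (Suc t) =
     (F *v kf_mean F B H R Q m0 S0 u y t + B *v u t)
     + kf_gain F H R Q S0 (Suc t) *v
         (y (Suc t) - H *v (F *v kf_mean F B H R Q m0 S0 u y t + B *v u t))"
  by (simp add: matrix_vector_mult_diff_rdistrib matrix_vector_mult_diff_distrib
      matrix_vector_mul_lid matrix_vector_mul_assoc)

lemma kf_mean_diff_Suc:
  fixes F B H R Q S0 S0' :: mat2 and m0 m0' :: vec2 and u y y' :: "nat \<Rightarrow> vec2" and t :: nat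
  defines "m \<equiv> kf_mean F B H R Q m0 S0 u y"
      and "m' \<equiv> kf_mean F B H R Q m0' S0' u y'"
      and "K \<equiv> kf_gain F H R Q S0 (Suc t)"
      and "K' \<equiv> kf_gain F H R Q S0' (Suc t)"
  shows "m (Suc t) - m' (Suc t) =
           (F - K' ** H ** F) *v (m t - m' t)
         + (K - K') *v (y (Suc t) - H *v (F *v m t + B *v u t))
         + K' *v (y (Suc t) - y' (Suc t))"
proof -
  define p p' where "p = F *v m t + B *v u t" and "p' = F *v m' t + B *v u t"
  have updates: "m (Suc t) = p + K *v (y (Suc t) - H *v p)"
                "m' (Suc t) = p' + K' *v (y' (Suc t) - H *v p')"
    by (simp_all only: m_def m'_def K_def K'_def p_def p'_def kf_mean_Suc_innovation)
  have "F *v (m t - m' t) = p - p'"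
    by (simp add: p_def p'_def matrix_vector_mult_diff_distrib)
  then have "(F - K' ** H ** F) *v (m t - m' t) = (p - p') - K' *v (H *v (p - p'))"
    by (simp add: matrix_vector_mult_diff_rdistrib matrix_vector_mul_assoc[symmetric])
  then show ?thesis
    unfolding updates p_def[symmetric] by (simp add: algebra_simps)
qed

lemma desc_prod_Suc_left: "desc_prod A (Suc t) (Suc n) = A (Suc t) ** desc_prod A t n"
proof (induction n)
  case 0
  then show ?case by (simp add: matrix_mul_rid matrix_mul_lid)
next
  case (Suc n)
  have "desc_prod A (Suc t) (Suc (Suc n)) = desc_prod A (Suc t) (Suc n) ** A (t - n)"
    by simp
  also have "\<dots> = A (Suc t) ** (desc_prod A t n ** A (t - n))"
    using Suc by (simp add: matrix_mul_assoc)
  finally show ?case by simp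
qed

lemma affine_recursion_unroll:
  fixes d E :: "nat \<Rightarrow> vec2" and A :: "nat \<Rightarrow> mat2"
  assumes rec: "\<And>s. d (Suc s) = A (Suc s) *v d s + E (Suc s)"
  shows "d (Suc t) = desc_prod A (Suc t) (Suc t) *v d 0
           + (\<Sum>i<t. desc_prod A (Suc t) (Suc i) *v E (t - i)) + E (Suc t)"
proof (induction t)
  case 0
  show ?case using rec[of 0] by (simp add: matrix_mul_lid)
next
  case (Suc t)
  have sum_shift: "(\<Sum>i<Suc t. desc_prod A (Suc (Suc t)) (Suc i) *v E (Suc t - i))
      = A (Suc (Suc t)) *v (\<Sum>i<t. desc_prod A (Suc t) (Suc i) *v E (t - i))
        + A (Suc (Suc t)) *v E (Suc t)"
    unfolding sum.lessThan_Suc_shift desc_prod_Suc_left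
    by (simp add: matrix_vector_mul_assoc linear_sum[OF matrix_vector_mul_linear]
        matrix_mul_rid add.commute del: desc_prod.simps(2))
  have "d (Suc (Suc t)) = A (Suc (Suc t)) *v d (Suc t) + E (Suc (Suc t))"
    by (rule rec)
  also have "\<dots> = desc_prod A (Suc (Suc t)) (Suc (Suc t)) *v d 0
      + (\<Sum>i<Suc t. desc_prod A (Suc (Suc t)) (Suc i) *v E (Suc t - i)) + E (Suc (Suc t))"
    unfolding Suc sum_shift
    by (simp only: desc_prod_Suc_left[of A "Suc t" "Suc t"] matrix_vector_mul_assoc
        matrix_vector_right_distrib add.assoc)
  finally show ?case .
qed

theorem theorem1:
  fixes F B H R Q S0 S0' :: mat2 and m0 m0' :: vec2
    and u z \<epsilon> :: "nat \<Rightarrow> vec2" and t :: nat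
  defines "m \<equiv> kf_mean F B H R Q m0 S0 u z"
      and "m' \<equiv> kf_mean F B H R Q m0' S0' u (\<lambda>s. z s + \<epsilon> s)"
      and "K \<equiv> kf_gain F H R Q S0"
      and "K' \<equiv> kf_gain F H R Q S0'"
  defines "A \<equiv> (\<lambda>s. F - K' s ** H ** F)"
      and "Bt \<equiv> (\<lambda>s. (K s - K' s) *v (z s - H *v (F *v m (s - 1) + B *v u (s - 1))))"
      and "C \<equiv> (\<lambda>s. - (K' s *v \<epsilon> s))"
  assumes "t \<ge> 1"
  shows "m t - m' t =
           desc_prod A t t *v (m0 - m0')
         + (\<Sum>i<t - 1. desc_prod A t (Suc i) *v (Bt (t - 1 - i) + C (t - 1 - i)))
         + Bt t + C t"
proof -
  obtain k where t: "t = Suc k"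
    using \<open>t \<ge> 1\<close> by (cases t) auto
  have "m (Suc s) - m' (Suc s) = A (Suc s) *v (m s - m' s) + (Bt (Suc s) + C (Suc s))" for s
    using kf_mean_diff_Suc[of F B H R Q m0 S0 u z s m0' S0' "\<lambda>s. z s + \<epsilon> s"]
    by (simp add: m_def m'_def K_def K'_def A_def Bt_def C_def
        linear_neg[OF matrix_vector_mul_linear] del: kf_mean.simps(2))
  from affine_recursion_unroll[of "\<lambda>s. m s - m' s", OF this, of k]
  show ?thesis
    by (simp add: t m_def m'_def add.assoc)
qed

end
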